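(* Let $G$ be a torsion-free locally compact abelian group such that $G_{op}=G$, and let $G^{*}$ be its minimal divisible extension. Then $G^{*}_{op}=G^{*}$.
   Context: A subgroup $H$ of an abelian group $G$ is pure if $nH=H\cap nG$ for every positive integer $n$. For an LCA group $G$, $G_{op}$ denotes the intersection of all open pure subgroups of $G$. For an LCA group $G$, $G^{*}$ denotes the minimal divisible extension (divisible hull) of $G$, topologized as an LCA group containing $G$ as an open subgroup (as in Hewitt–Ross 4.18.h). *)

theory Defs
  imports "HOL-Analysis.Analysis" "HOL-Algebra.Algebra"
begin

text \<open>Abelian groups are written multiplicatively (HOL-Algebra); the additive
 multiple n x of the paper is x [^] n here.\<close>

definition topological_comm_group :: "('a, 'b) monoid_scheme \<Rightarrow> 'a topology \<Rightarrow> bool" where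
  "topological_comm_group G T \<longleftrightarrow>
     comm_group G \<and> topspace T = carrier G \<and>
     continuous_map (prod_topology T T) T (\<lambda>(x, y). x \<otimes>\<^bsub>G\<^esub> y) \<and>
     continuous_map T T (\<lambda>x. inv\<^bsub>G\<^esub> x)"

definition LCA_group :: "('a, 'b) monoid_scheme \<Rightarrow> 'a topology \<Rightarrow> bool" where
  "LCA_group G T \<longleftrightarrow> topological_comm_group G T \<and> Hausdorff_space T \<and> locally_compact_space T"

definition multiples :: "('a, 'b) monoid_scheme \<Rightarrow> nat \<Rightarrow> 'a set \<Rightarrow> 'a set" where
  "multiples G n H = (\<lambda>x. x [^]\<^bsub>G\<^esub> n) ` H"

definition pure_subgroup :: "'a set \<Rightarrow> ('a, 'b) monoid_scheme \<Rightarrow> bool" where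
  "pure_subgroup H G \<longleftrightarrow> subgroup H G \<and>
     (\<forall>n::nat. n > 0 \<longrightarrow> multiples G n H = H \<inter> multiples G n (carrier G))"

definition G_op :: "('a, 'b) monoid_scheme \<Rightarrow> 'a topology \<Rightarrow> 'a set" where
  "G_op G T = \<Inter> {H. pure_subgroup H G \<and> openin T H}"

definition torsion_free :: "('a, 'b) monoid_scheme \<Rightarrow> bool" where
  "torsion_free G \<longleftrightarrow> (\<forall>x\<in>carrier G. \<forall>n::nat. n > 0 \<longrightarrow> x [^]\<^bsub>G\<^esub> n = \<one>\<^bsub>G\<^esub> \<longrightarrow> x = \<one>\<^bsub>G\<^esub>)"

definition divisible_group :: "('a, 'b) monoid_scheme \<Rightarrow> bool" where
  "divisible_group G \<longleftrightarrow> (\<forall>x\<in>carrier G. \<forall>n::nat. n > 0 \<longrightarrow> (\<exists>y\<in>carrier G. y [^]\<^bsub>G\<^esub> n = x))"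

text \<open>(H, TH) is the minimal divisible extension G* of the LCA group (G, TG), via the
 embedding f: H is an abelian topological group, f is an injective homomorphism
 which is a homeomorphism of G onto the open subgroup f(G) of H, H is divisible, and
 H is an essential extension of f(G) (every nonzero cyclic subgroup of H meets f(G)
 nontrivially), i.e. H is a minimal divisible extension (divisible hull) of G.\<close>
definition minimal_divisible_extension ::
  "('a, 'b) monoid_scheme \<Rightarrow> 'a topology \<Rightarrow> ('c, 'd) monoid_scheme \<Rightarrow> 'c topology \<Rightarrow> ('a \<Rightarrow> 'c) \<Rightarrow> bool" where
  "minimal_divisible_extension G TG H TH f \<longleftrightarrow>
     LCA_group H TH \<and>
     f \<in> hom G H \<and> inj_on f (carrier G) \<and>
     openin TH (f ` carrier G) \<and>
     homeomorphic_map TG (subtopology TH (f ` carrier G)) f \<and>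
     divisible_group H \<and>
     (\<forall>h\<in>carrier H. h \<noteq> \<one>\<^bsub>H\<^esub> \<longrightarrow>
        (\<exists>n::int. h [^]\<^bsub>H\<^esub> n \<in> f ` carrier G \<and> h [^]\<^bsub>H\<^esub> n \<noteq> \<one>\<^bsub>H\<^esub>))"

end

theory Submission
  imports Defs
begin

text \<open>Let P be an open pure subgroup of G*. Since G* is torsion-free (it is an essential
 extension of the torsion-free group G), roots in G* are unique, so P is closed under
 taking roots and its preimage in G is again pure; it is also open, hence all of G because
 G_op = G. Thus P contains G, and as every element of G* has a nonzero multiple in G,
 closure under roots gives P = G*.\<close>

definition essential_subset :: "'a set \<Rightarrow> ('a, 'b) monoid_scheme \<Rightarrow> bool" where
  "essential_subset S G \<longleftrightarrow>
     (\<forall>h\<in>carrier G. h \<noteq> \<one>\<^bsub>G\<^esub> \<longrightarrow> (\<exists>n::int. h [^]\<^bsub>G\<^esub> n \<in> S \<and> h [^]\<^bsub>G\<^esub> n \<noteq> \<one>\<^bsub>G\<^esub>))"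

lemma (in group) int_pow_in_subgroup_imp_nat_pow_abs:
  assumes "subgroup P G" "x \<in> carrier G" "x [^] (k::int) \<in> P"
  shows "x [^] nat \<bar>k\<bar> \<in> P"
proof (cases "k < 0")
  case True
  then have "x [^] nat \<bar>k\<bar> = inv (x [^] k)"
    using assms(2) by (simp add: int_pow_neg[symmetric] int_pow_int[symmetric])
  then show ?thesis using subgroup.m_inv_closed[OF assms(1,3)] by simp
next
  case False
  then show ?thesis using assms(3) by (simp add: int_pow_int[symmetric])
qed

lemma (in group_hom) subgroup_vimage:
  assumes "subgroup P H"
  shows "subgroup {x \<in> carrier G. h x \<in> P} G"
  using assms by (auto intro!: G.subgroupI simp: subgroup.m_closed subgroup.m_inv_closed
      subgroup.one_closed)

lemma torsion_free_nat_pow_eq_imp_eq: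
  fixes G (structure)
  assumes "comm_group G" "torsion_free G" "n > 0"
    and "a \<in> carrier G" "b \<in> carrier G" "a [^]\<^bsub>G\<^esub> (n::nat) = b [^]\<^bsub>G\<^esub> n"
  shows "a = b"
proof -
  interpret comm_group G by (fact assms(1))
  have "(a \<otimes> inv b) [^] n = a [^] n \<otimes> inv b [^] n"
    using assms(4,5) by (simp add: pow_mult_distrib m_comm)
  also have "\<dots> = \<one>" using assms(5,6) by (simp add: nat_pow_inv)
  finally have "a \<otimes> inv b = \<one>"
    using assms(2-5) unfolding torsion_free_def by blast
  moreover have "a = (a \<otimes> inv b) \<otimes> b" using assms(4,5) by (simp add: m_assoc)
  ultimately show ?thesis using assms(5) by simp
qed

lemma pure_subgroup_root_closed:
  assumes "comm_group G" "torsion_free G" "pure_subgroup P G"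
    and "n > 0" "x \<in> carrier G" "x [^]\<^bsub>G\<^esub> (n::nat) \<in> P"
  shows "x \<in> P"
proof -
  have "x [^]\<^bsub>G\<^esub> n \<in> P \<inter> multiples G n (carrier G)"
    using assms(5,6) unfolding multiples_def by blast
  then obtain p where p: "p \<in> P" "x [^]\<^bsub>G\<^esub> n = p [^]\<^bsub>G\<^esub> n"
    using assms(3,4) unfolding pure_subgroup_def multiples_def by auto
  moreover have "p \<in> carrier G"
    using p(1) assms(3) subgroup.subset unfolding pure_subgroup_def by blast
  ultimately show ?thesis
    using torsion_free_nat_pow_eq_imp_eq[OF assms(1,2,4,5)] by metis
qed

lemma torsion_free_if_essential_embedding:
  assumes "group G" "group H" "torsion_free G" "f \<in> hom G H" "inj_on f (carrier G)"
    and "essential_subset (f ` carrier G) H"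
  shows "torsion_free H"
  unfolding torsion_free_def
proof (intro ballI allI impI; rule ccontr)
  fix h and n :: nat
  assume h: "h \<in> carrier H" and n: "n > 0" and "h [^]\<^bsub>H\<^esub> n = \<one>\<^bsub>H\<^esub>" "h \<noteq> \<one>\<^bsub>H\<^esub>"
  interpret group_hom G H f using assms(1,2,4) by (simp add: group_hom_def group_hom_axioms_def)
  obtain m :: int and g where g: "g \<in> carrier G" "f g = h [^]\<^bsub>H\<^esub> m" "f g \<noteq> \<one>\<^bsub>H\<^esub>"
    using assms(6) h \<open>h \<noteq> \<one>\<^bsub>H\<^esub>\<close> unfolding essential_subset_def by (metis imageE)
  have "f (g [^]\<^bsub>G\<^esub> n) = (h [^]\<^bsub>H\<^esub> m) [^]\<^bsub>H\<^esub> (int n)"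
    using g by (simp add: hom_nat_pow int_pow_int)
  also have "\<dots> = (h [^]\<^bsub>H\<^esub> (int n)) [^]\<^bsub>H\<^esub> m"
    using h by (simp add: H.int_pow_pow mult.commute)
  also have "\<dots> = \<one>\<^bsub>H\<^esub>" using \<open>h [^]\<^bsub>H\<^esub> n = \<one>\<^bsub>H\<^esub>\<close> by (simp add: int_pow_int)
  finally have "g [^]\<^bsub>G\<^esub> n = \<one>\<^bsub>G\<^esub>"
    using g(1) assms(5) inj_on_one_iff G.nat_pow_closed by blast
  then have "g = \<one>\<^bsub>G\<^esub>" using assms(3) g(1) n unfolding torsion_free_def by blast
  then show False using g(3) by simp
qed

lemma pure_subgroup_vimage:
  assumes "group_hom G H f" "comm_group H" "torsion_free H" "pure_subgroup P H"
  shows "pure_subgroup {x \<in> carrier G. f x \<in> P} G" (is "pure_subgroup ?K G")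
proof -
  interpret group_hom G H f by (fact assms(1))
  have P: "subgroup P H" using assms(4) unfolding pure_subgroup_def by blast
  have P_pow_closed: "y [^]\<^bsub>H\<^esub> k \<in> P" if "y \<in> P" for y and k :: nat
    using H.subgroup_int_pow_closed[OF P that, of "int k"] by (simp only: int_pow_int)
  have "multiples G n ?K = ?K \<inter> multiples G n (carrier G)" if "n > 0" for n
  proof
    show "multiples G n ?K \<subseteq> ?K \<inter> multiples G n (carrier G)"
    proof
      fix x assume "x \<in> multiples G n ?K"
      then obtain y where y: "y \<in> carrier G" "f y \<in> P" "x = y [^]\<^bsub>G\<^esub> n"
        unfolding multiples_def by blast
      have "f x \<in> P" using P_pow_closed[OF y(2)] by (simp add: y(1,3) hom_nat_pow)
      moreover have "x \<in> multiples G n (carrier G)"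
        unfolding multiples_def y(3) using y(1) by (rule imageI)
      moreover have "x \<in> carrier G" using y(1,3) by simp
      ultimately show "x \<in> ?K \<inter> multiples G n (carrier G)" by blast
    qed
    show "?K \<inter> multiples G n (carrier G) \<subseteq> multiples G n ?K"
    proof
      fix x assume x: "x \<in> ?K \<inter> multiples G n (carrier G)"
      then obtain y where y: "y \<in> carrier G" "x = y [^]\<^bsub>G\<^esub> n"
        unfolding multiples_def by blast
      have "f y [^]\<^bsub>H\<^esub> n \<in> P" using x y by (simp add: hom_nat_pow)
      then have "f y \<in> P"
        by (rule pure_subgroup_root_closed[OF assms(2-4) that hom_closed[OF y(1)]])
      then show "x \<in> multiples G n ?K"
        unfolding multiples_def y(2) using y(1) by (intro imageI) simp
    qed
  qed
  then show ?thesis unfolding pure_subgroup_def using subgroup_vimage[OF P] by blast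
qed

lemma pure_subgroup_eq_carrier_if_essential:
  fixes G (structure)
  assumes "comm_group G" "torsion_free G" "pure_subgroup P G"
    and "essential_subset S G" "S \<subseteq> P"
  shows "P = carrier G"
proof
  interpret comm_group G by (fact assms(1))
  have P: "subgroup P G" using assms(3) unfolding pure_subgroup_def by blast
  then show "P \<subseteq> carrier G" by (fact subgroup.subset)
  show "carrier G \<subseteq> P"
  proof
    fix h assume h: "h \<in> carrier G"
    show "h \<in> P"
    proof (cases "h = \<one>")
      case True
      then show ?thesis using subgroup.one_closed[OF P] by simp
    next
      case False
      then obtain k :: int where k: "h [^] k \<in> P" "h [^] k \<noteq> \<one>"
        using assms(4,5) h unfolding essential_subset_def by blast
      then have "nat \<bar>k\<bar> > 0" by (cases "k = 0") auto
      moreover have "h [^] nat \<bar>k\<bar> \<in> P"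
        using int_pow_in_subgroup_imp_nat_pow_abs[OF P h k(1)] .
      ultimately show ?thesis
        using pure_subgroup_root_closed[OF assms(1-3) _ h] by blast
    qed
  qed
qed

lemma pure_subgroup_carrier: "group G \<Longrightarrow> pure_subgroup (carrier G) G"
  unfolding pure_subgroup_def multiples_def
  by (auto intro: group.subgroup_self monoid.nat_pow_closed group.is_monoid)

lemma G_op_eq_carrier_iff:
  assumes "group G" "topspace T = carrier G"
  shows "G_op G T = carrier G \<longleftrightarrow> (\<forall>P. pure_subgroup P G \<and> openin T P \<longrightarrow> P = carrier G)"
proof -
  have "pure_subgroup (carrier G) G \<and> openin T (carrier G)"
    using assms pure_subgroup_carrier openin_topspace by metis
  moreover have "P \<subseteq> carrier G" if "pure_subgroup P G" for P
    using that subgroup.subset unfolding pure_subgroup_def by blast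
  ultimately show ?thesis unfolding G_op_def by blast
qed

theorem corollary10:
  fixes G :: "('a, 'b) monoid_scheme" and TG :: "'a topology"
    and H :: "('c, 'd) monoid_scheme" and TH :: "'c topology" and f :: "'a \<Rightarrow> 'c"
  assumes "LCA_group G TG"
    and "torsion_free G"
    and "G_op G TG = carrier G"
    and "minimal_divisible_extension G TG H TH f"
  shows "G_op H TH = carrier H"
proof -
  from assms(1) have G: "comm_group G" "topspace TG = carrier G"
    unfolding LCA_group_def topological_comm_group_def by auto
  from assms(4) have H: "comm_group H" "topspace TH = carrier H"
    and f: "f \<in> hom G H" "inj_on f (carrier G)"
    and f_cont: "continuous_map TG TH f"
    and essential: "essential_subset (f ` carrier G) H"
    unfolding minimal_divisible_extension_def LCA_group_def topological_comm_group_def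
      essential_subset_def
    by (auto dest: homeomorphic_imp_continuous_map continuous_map_into_fulltopology)
  have groups: "group G" "group H" using G(1) H(1) by (simp_all add: comm_group.axioms(2))
  have f_hom: "group_hom G H f"
    using groups f(1) by (simp add: group_hom_def group_hom_axioms_def)
  have H_tf: "torsion_free H"
    using torsion_free_if_essential_embedding[OF groups assms(2) f essential] .
  have "P = carrier H" if P: "pure_subgroup P H" "openin TH P" for P
  proof -
    have "pure_subgroup {x \<in> carrier G. f x \<in> P} G"
      using pure_subgroup_vimage[OF f_hom H(1) H_tf P(1)] .
    moreover have "openin TG {x \<in> carrier G. f x \<in> P}"
      using openin_continuous_map_preimage[OF f_cont P(2)] G(2) by simp
    ultimately have "{x \<in> carrier G. f x \<in> P} = carrier G"
      using assms(3) G_op_eq_carrier_iff[OF groups(1) G(2)] by blast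
    then have "f ` carrier G \<subseteq> P" by blast
    then show ?thesis
      using pure_subgroup_eq_carrier_if_essential[OF H(1) H_tf P(1) essential] by blast
  qed
  then show ?thesis using G_op_eq_carrier_iff[OF groups(2) H(2)] by blast
qed

end
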